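(* Let $H$ be a complex Hilbert space and $d$ a positive integer. Suppose that $A=(A_1,\ldots,A_d)$ is a $d$-tuple of commuting contractions on $H$ and $T=(T_1,\ldots,T_d)$ is the commuting operator-valued multishift on $\ell^2_H(\mathbb N^d)$ with operator weights $A^{(j)}_\alpha=A_j$ for all $\alpha\in\mathbb N^d$ and $j=1,\ldots,d$. Then $T$ satisfies the von Neumann's inequality if and only if $A$ satisfies the von Neumann's inequality.
   Context: $\mathbb N$ denotes the nonnegative integers; $\varepsilon_j\in\mathbb N^d$ has $1$ in the $j$-th place and $0$ elsewhere; $\mathbb D^d$ is the open unit polydisc. $\ell^2_H(\mathbb N^d)=\bigoplus_{\alpha\in\mathbb N^d}H$. Given bounded operators $A^{(j)}_\alpha:H\to H$, the operator-valued multishift with these operator weights is the $d$-tuple defined by $T_j(\oplus_\alpha x_\alpha)=\oplus_\alpha A^{(j)}_{\alpha-\varepsilon_j}x_{\alpha-\varepsilon_j}$ (the term being $0$ when $\alpha_j=0$). A commuting $d$-tuple $S$ of contractions satisfies the von Neumann's inequality if $\|p(S)\|\le\sup_{z\in\mathbb D^d}|p(z)|$ for every $p\in\mathbb C[z_1,\ldots,z_d]$, where $p(S)=\sum a_\alpha S_1^{\alpha_1}\cdots S_d^{\alpha_d}$ for $p=\sum a_\alpha z^\alpha$. *)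

theory Defs
  imports "HOL-Analysis.Analysis" "HOL-Library.Function_Algebras"
begin

text \<open>A complex (pre-)Hilbert space is given explicitly by a carrier set V inside an
  abelian group type, a complex scalar multiplication smul and an inner product ip
  (linear in the first argument, conjugate-linear in the second).\<close>

definition hnorm :: "('h \<Rightarrow> 'h \<Rightarrow> complex) \<Rightarrow> 'h \<Rightarrow> real" where
  "hnorm ip x = sqrt (Re (ip x x))"

definition chilbert ::
  "'h::ab_group_add set \<Rightarrow> (complex \<Rightarrow> 'h \<Rightarrow> 'h) \<Rightarrow> ('h \<Rightarrow> 'h \<Rightarrow> complex) \<Rightarrow> bool" where
  "chilbert V smul ip \<longleftrightarrow>
     0 \<in> V \<and>
     (\<forall>x\<in>V. \<forall>y\<in>V. x + y \<in> V) \<and>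
     (\<forall>a. \<forall>x\<in>V. smul a x \<in> V) \<and>
     (\<forall>x\<in>V. - x = smul (-1) x) \<and>
     (\<forall>a. \<forall>x\<in>V. \<forall>y\<in>V. smul a (x + y) = smul a x + smul a y) \<and>
     (\<forall>a b. \<forall>x\<in>V. smul (a + b) x = smul a x + smul b x) \<and>
     (\<forall>a b. \<forall>x\<in>V. smul a (smul b x) = smul (a * b) x) \<and>
     (\<forall>x\<in>V. smul 1 x = x) \<and>
     (\<forall>x\<in>V. \<forall>y\<in>V. \<forall>z\<in>V. ip (x + y) z = ip x z + ip y z) \<and>
     (\<forall>a. \<forall>x\<in>V. \<forall>y\<in>V. ip (smul a x) y = a * ip x y) \<and>
     (\<forall>x\<in>V. \<forall>y\<in>V. ip y x = cnj (ip x y)) \<and>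
     (\<forall>x\<in>V. Im (ip x x) = 0 \<and> Re (ip x x) \<ge> 0) \<and>
     (\<forall>x\<in>V. ip x x = 0 \<longrightarrow> x = 0) \<and>
     (\<forall>X::nat \<Rightarrow> 'h. (\<forall>n. X n \<in> V) \<longrightarrow>
        (\<forall>e>0. \<exists>N. \<forall>m\<ge>N. \<forall>n\<ge>N. hnorm ip (X m - X n) < e) \<longrightarrow>
        (\<exists>L\<in>V. (\<lambda>n. hnorm ip (X n - L)) \<longlonglongrightarrow> 0))"

definition bounded_op ::
  "'h::ab_group_add set \<Rightarrow> (complex \<Rightarrow> 'h \<Rightarrow> 'h) \<Rightarrow> ('h \<Rightarrow> 'h \<Rightarrow> complex) \<Rightarrow> ('h \<Rightarrow> 'h) \<Rightarrow> bool" where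
  "bounded_op V smul ip A \<longleftrightarrow>
     (\<forall>x\<in>V. A x \<in> V) \<and>
     (\<forall>x\<in>V. \<forall>y\<in>V. A (x + y) = A x + A y) \<and>
     (\<forall>a. \<forall>x\<in>V. A (smul a x) = smul a (A x)) \<and>
     (\<exists>K. \<forall>x\<in>V. hnorm ip (A x) \<le> K * hnorm ip x)"

definition opnorm :: "'h set \<Rightarrow> ('h \<Rightarrow> 'h \<Rightarrow> complex) \<Rightarrow> ('h \<Rightarrow> 'h) \<Rightarrow> real" where
  "opnorm V ip A = Sup ((\<lambda>x. hnorm ip (A x)) ` {x \<in> V. hnorm ip x \<le> 1})"

text \<open>d-tuples of operators are indexed by j < d (0-based).  Multi-indices in
  \<open>\<nat>^d\<close> are functions nat \<Rightarrow> nat vanishing at all j \<ge> d.\<close>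

definition multi_idx :: "nat \<Rightarrow> (nat \<Rightarrow> nat) set" where
  "multi_idx d = {\<alpha>. \<forall>j\<ge>d. \<alpha> j = 0}"

definition polydisc :: "nat \<Rightarrow> (nat \<Rightarrow> complex) set" where
  "polydisc d = {z. \<forall>j<d. cmod (z j) < 1}"

text \<open>A polynomial p = \<Sum>\<alpha>\<in>F. a \<alpha> z^\<alpha> in d variables is given by a finite set F of
  multi-indices and coefficients a.\<close>

definition poly_eval :: "nat \<Rightarrow> (nat \<Rightarrow> nat) set \<Rightarrow> ((nat \<Rightarrow> nat) \<Rightarrow> complex) \<Rightarrow> (nat \<Rightarrow> complex) \<Rightarrow> complex" where
  "poly_eval d F a z = (\<Sum>\<alpha>\<in>F. a \<alpha> * (\<Prod>j<d. z j ^ \<alpha> j))"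

definition mono_op :: "(nat \<Rightarrow> 'h \<Rightarrow> 'h) \<Rightarrow> nat \<Rightarrow> (nat \<Rightarrow> nat) \<Rightarrow> 'h \<Rightarrow> 'h" where
  "mono_op S d \<alpha> = foldr (\<lambda>j f. (S j ^^ \<alpha> j) \<circ> f) [0..<d] id"

definition poly_op ::
  "(complex \<Rightarrow> 'h \<Rightarrow> 'h) \<Rightarrow> nat \<Rightarrow> (nat \<Rightarrow> 'h \<Rightarrow> 'h) \<Rightarrow> (nat \<Rightarrow> nat) set \<Rightarrow> ((nat \<Rightarrow> nat) \<Rightarrow> complex) \<Rightarrow> 'h \<Rightarrow> 'h::comm_monoid_add" where
  "poly_op smul d S F a x = (\<Sum>\<alpha>\<in>F. smul (a \<alpha>) (mono_op S d \<alpha> x))"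

definition commuting_contractions ::
  "'h::ab_group_add set \<Rightarrow> (complex \<Rightarrow> 'h \<Rightarrow> 'h) \<Rightarrow> ('h \<Rightarrow> 'h \<Rightarrow> complex) \<Rightarrow> nat \<Rightarrow> (nat \<Rightarrow> 'h \<Rightarrow> 'h) \<Rightarrow> bool" where
  "commuting_contractions V smul ip d S \<longleftrightarrow>
     (\<forall>j<d. bounded_op V smul ip (S j) \<and> opnorm V ip (S j) \<le> 1) \<and>
     (\<forall>i<d. \<forall>j<d. \<forall>x\<in>V. S i (S j x) = S j (S i x))"

definition von_neumann_ineq ::
  "'h::ab_group_add set \<Rightarrow> (complex \<Rightarrow> 'h \<Rightarrow> 'h) \<Rightarrow> ('h \<Rightarrow> 'h \<Rightarrow> complex) \<Rightarrow> nat \<Rightarrow> (nat \<Rightarrow> 'h \<Rightarrow> 'h) \<Rightarrow> bool" where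
  "von_neumann_ineq V smul ip d S \<longleftrightarrow>
     (\<forall>F a. finite F \<longrightarrow> F \<subseteq> multi_idx d \<longrightarrow>
        opnorm V ip (poly_op smul d S F a) \<le> (SUP z\<in>polydisc d. cmod (poly_eval d F a z)))"

definition l2_space :: "('h::zero \<Rightarrow> 'h \<Rightarrow> complex) \<Rightarrow> nat \<Rightarrow> ((nat \<Rightarrow> nat) \<Rightarrow> 'h) set" where
  "l2_space ip d = {x. (\<forall>\<alpha>. \<alpha> \<notin> multi_idx d \<longrightarrow> x \<alpha> = 0) \<and>
                       (\<lambda>\<alpha>. (hnorm ip (x \<alpha>))\<^sup>2) summable_on multi_idx d}"

definition l2_smul :: "(complex \<Rightarrow> 'h \<Rightarrow> 'h) \<Rightarrow> complex \<Rightarrow> ((nat \<Rightarrow> nat) \<Rightarrow> 'h) \<Rightarrow> ((nat \<Rightarrow> nat) \<Rightarrow> 'h)" where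
  "l2_smul smul c x = (\<lambda>\<alpha>. smul c (x \<alpha>))"

definition l2_ip :: "('h \<Rightarrow> 'h \<Rightarrow> complex) \<Rightarrow> nat \<Rightarrow> ((nat \<Rightarrow> nat) \<Rightarrow> 'h) \<Rightarrow> ((nat \<Rightarrow> nat) \<Rightarrow> 'h) \<Rightarrow> complex" where
  "l2_ip ip d x y = infsum (\<lambda>\<alpha>. ip (x \<alpha>) (y \<alpha>)) (multi_idx d)"

definition multishift ::
  "nat \<Rightarrow> (nat \<Rightarrow> (nat \<Rightarrow> nat) \<Rightarrow> 'h \<Rightarrow> 'h) \<Rightarrow> nat \<Rightarrow> ((nat \<Rightarrow> nat) \<Rightarrow> 'h) \<Rightarrow> ((nat \<Rightarrow> nat) \<Rightarrow> 'h::zero)" where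
  "multishift d W j x = (\<lambda>\<alpha>. if \<alpha> \<in> multi_idx d \<and> 0 < \<alpha> j
                               then W j (\<alpha>(j := \<alpha> j - 1)) (x (\<alpha>(j := \<alpha> j - 1))) else 0)"

end

theory Submission
  imports Defs
begin

text \<open>
  The operator \<open>p(T)\<close> is a convolution, \<open>(p(T) x)\<^sub>\<alpha> = \<Sum>\<^sub>\<beta> a\<^sub>\<beta> A\<^sup>\<beta> x\<^sub>\<alpha>\<^sub>-\<^sub>\<beta>\<close>.
  For \<open>x\<close> supported in a finite box, the discrete Fourier transform over a larger box, whose
  characters are the monomials evaluated at finitely many points \<open>\<omega>\<close> of the torus, turns this
  convolution into the operators \<open>p\<^sub>\<omega>(A)\<close> with \<open>p\<^sub>\<omega>(z) = p(\<omega> z)\<close>. Since the polydisc is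
  invariant under these rotations, von Neumann's inequality for \<open>A\<close> bounds every \<open>p\<^sub>\<omega>(A)\<close>
  by \<open>sup |p|\<close>, and Parseval's identity transfers the bound to \<open>p(T)\<close>.

  Conversely, let \<open>x\<close> be the vector that equals \<open>h\<close> on the box \<open>[0,L)\<^sup>d\<close>, normalised to
  norm \<open>|h|\<close>. If \<open>D\<close> exceeds the degrees of \<open>p\<close>, then on the sub-box \<open>[D,L)\<^sup>d\<close> the vector
  \<open>p(T) x\<close> equals \<open>p(A) h\<close> with the same normalisation, so that
  \<open>((L - D) / L)\<^sup>d |p(A) h|\<^sup>2 \<le> |p(T)|\<^sup>2 |h|\<^sup>2\<close>; now let \<open>L \<rightarrow> \<infinity>\<close>.
\<close>

lemma sum_fun_apply: "(\<Sum>a\<in>A. f a) x = (\<Sum>a\<in>A. f a x)"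
  by (induction A rule: infinite_finite_induct) auto

lemma infsum_complex_of_real:
  "infsum (\<lambda>x. complex_of_real (f x)) A = complex_of_real (infsum f A)"
  by (rule infsum_bounded_linear_strong[OF summable_on_bounded_linear_iff])
     (auto intro: bounded_linear_of_real bounded_linear_Re)

text \<open>The binder order in \<open>ip_cnj\<close> makes it coincide literally with the conjunct of
  \<^const>\<open>chilbert\<close>.\<close>

locale complex_inner_space =
  fixes smul :: "complex \<Rightarrow> 'h::ab_group_add \<Rightarrow> 'h" and ip :: "'h \<Rightarrow> 'h \<Rightarrow> complex"
  assumes smul_add: "smul a (x + y) = smul a x + smul a y"
    and add_smul: "smul (a + b) x = smul a x + smul b x"
    and smul_smul: "smul a (smul b x) = smul (a * b) x"
    and ip_add: "ip (x + y) z = ip x z + ip y z"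
    and ip_smul: "ip (smul a x) y = a * ip x y"
    and ip_cnj: "\<And>x y. ip y x = cnj (ip x y)"
    and ip_self_Im: "Im (ip x x) = 0"
    and ip_self_Re: "Re (ip x x) \<ge> 0"
    and ip_self_eq_0: "ip x x = 0 \<Longrightarrow> x = 0"

lemma chilbert_imp_complex_inner_space:
  assumes "chilbert UNIV smul ip"
  shows "complex_inner_space smul ip"
  using assms unfolding chilbert_def complex_inner_space_def ball_UNIV all_conj_distrib
  by (elim conjE) (intro conjI; assumption)

context complex_inner_space
begin

abbreviation N :: "'h \<Rightarrow> real" where
  "N \<equiv> hnorm ip"

lemma smul_zero_left [simp]: "smul 0 x = 0"
  using add_smul[of 0 0 x] by simp

lemma smul_zero_right [simp]: "smul a 0 = 0"
  using smul_add[of a 0 0] by simp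

lemma smul_sum: "smul a (\<Sum>i\<in>I. f i) = (\<Sum>i\<in>I. smul a (f i))"
  by (induction I rule: infinite_finite_induct) (auto simp: smul_add)

lemma smul_commute: "smul a (smul b x) = smul b (smul a x)"
  by (simp add: smul_smul mult.commute)

lemma ip_zero_left [simp]: "ip 0 y = 0"
  using ip_add[of 0 0 y] by simp

lemma ip_zero_right [simp]: "ip y 0 = 0"
  using ip_cnj[of 0 y] by simp

lemma ip_add_right: "ip z (x + y) = ip z x + ip z y"
  by (metis ip_add ip_cnj complex_cnj_add)

lemma ip_smul_right: "ip y (smul a x) = cnj a * ip y x"
  by (metis ip_smul ip_cnj complex_cnj_mult)

lemma ip_diff_left: "ip (x - y) z = ip x z - ip y z"
  using ip_add[of "x - y" y z] by simp

lemma ip_diff_right: "ip z (x - y) = ip z x - ip z y"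
  by (metis ip_diff_left ip_cnj complex_cnj_diff)

lemma ip_sum_left: "ip (\<Sum>i\<in>I. f i) y = (\<Sum>i\<in>I. ip (f i) y)"
  by (induction I rule: infinite_finite_induct) (auto simp: ip_add)

lemma ip_sum_right: "ip y (\<Sum>i\<in>I. f i) = (\<Sum>i\<in>I. ip y (f i))"
  by (induction I rule: infinite_finite_induct) (auto simp: ip_add_right)

lemma N_nonneg: "N x \<ge> 0"
  by (simp add: hnorm_def ip_self_Re)

lemma N_sq: "(N x)\<^sup>2 = Re (ip x x)"
  using ip_self_Re[of x] by (simp add: hnorm_def)

lemma ip_self_eq: "ip x x = complex_of_real ((N x)\<^sup>2)"
  using ip_self_Im[of x] N_sq[of x] by (simp add: complex_eq_iff)

lemma N_zero [simp]: "N 0 = 0"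
  by (simp add: hnorm_def)

lemma N_eq_0_iff: "N x = 0 \<longleftrightarrow> x = 0"
  using ip_self_eq[of x] ip_self_eq_0 by auto

lemma N_smul: "N (smul a x) = cmod a * N x"
proof -
  have "ip (smul a x) (smul a x) = a * cnj a * ip x x"
    by (simp add: ip_smul ip_smul_right)
  also have "a * cnj a = complex_of_real ((cmod a)\<^sup>2)"
    using complex_norm_square by simp
  finally have "(N (smul a x))\<^sup>2 = (cmod a * N x)\<^sup>2"
    by (simp add: N_sq power_mult_distrib)
  then show ?thesis
    using N_nonneg by (meson norm_ge_zero power2_eq_iff_nonneg zero_le_mult_iff)
qed

lemma cauchy_schwarz: "cmod (ip x y) \<le> N x * N y"
proof (cases "y = 0")
  case True
  then show ?thesis by simp
next
  case False
  define c where "c = ip y y"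
  define t where "t = ip x y / c"
  have c: "c = complex_of_real ((N y)\<^sup>2)" "N y > 0"
    using ip_self_eq N_eq_0_iff N_nonneg False c_def by (auto simp: order_le_less)
  have "0 \<le> Re (ip (x - smul t y) (x - smul t y))"
    by (rule ip_self_Re)
  also have "ip (x - smul t y) (x - smul t y) = ip x x - cnj t * ip x y - t * ip y x + t * cnj t * c"
    by (simp add: ip_diff_left ip_diff_right ip_smul ip_smul_right c_def algebra_simps)
  also have "\<dots> = ip x x - ip x y * cnj (ip x y) / c"
    using c by (simp add: t_def ip_cnj[of x y] field_simps)
  also have "ip x y * cnj (ip x y) = complex_of_real ((cmod (ip x y))\<^sup>2)"
    by (rule complex_norm_square[symmetric])
  finally have "0 \<le> (N x)\<^sup>2 - (cmod (ip x y))\<^sup>2 / (N y)\<^sup>2"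
    using c by (simp add: ip_self_eq[of x])
  then have "(cmod (ip x y))\<^sup>2 \<le> (N x * N y)\<^sup>2"
    using c by (simp add: field_simps power_mult_distrib)
  then show ?thesis
    using N_nonneg by (meson mult_nonneg_nonneg power2_le_imp_le)
qed

lemma N_triangle: "N (x + y) \<le> N x + N y"
proof -
  have "ip (x + y) (x + y) = ip x x + ip y y + (ip x y + cnj (ip x y))"
    by (simp add: ip_add ip_add_right ip_cnj[of x y])
  then have "(N (x + y))\<^sup>2 = (N x)\<^sup>2 + (N y)\<^sup>2 + 2 * Re (ip x y)"
    by (simp add: N_sq)
  also have "\<dots> \<le> (N x + N y)\<^sup>2"
    using cauchy_schwarz[of x y] complex_Re_le_cmod[of "ip x y"] by (simp add: power2_sum)
  finally show ?thesis
    using N_nonneg by (meson add_nonneg_nonneg power2_le_imp_le)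
qed

lemma N_sum_le: "N (\<Sum>i\<in>I. f i) \<le> (\<Sum>i\<in>I. N (f i))"
  by (induction I rule: infinite_finite_induct) (auto intro: order_trans[OF N_triangle])

lemma parseval:
  assumes "finite B"
    and orth: "\<And>\<alpha> \<beta>. \<alpha> \<in> B \<Longrightarrow> \<beta> \<in> B \<Longrightarrow>
      (\<Sum>k<n. e k \<alpha> * cnj (e k \<beta>)) = (if \<alpha> = \<beta> then of_nat n else 0)"
  shows "(\<Sum>k<n. (N (\<Sum>\<alpha>\<in>B. smul (e k \<alpha>) (z \<alpha>)))\<^sup>2) = real n * (\<Sum>\<alpha>\<in>B. (N (z \<alpha>))\<^sup>2)"
proof -
  have expand: "ip (\<Sum>\<alpha>\<in>B. smul (e k \<alpha>) (z \<alpha>)) (\<Sum>\<alpha>\<in>B. smul (e k \<alpha>) (z \<alpha>)) =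
      (\<Sum>\<alpha>\<in>B. \<Sum>\<beta>\<in>B. (e k \<alpha> * cnj (e k \<beta>)) * ip (z \<alpha>) (z \<beta>))" for k
    by (simp add: ip_sum_left ip_sum_right ip_smul ip_smul_right sum_distrib_left mult_ac)
      (rule sum.swap)
  have "complex_of_real (\<Sum>k<n. (N (\<Sum>\<alpha>\<in>B. smul (e k \<alpha>) (z \<alpha>)))\<^sup>2)
      = (\<Sum>k<n. ip (\<Sum>\<alpha>\<in>B. smul (e k \<alpha>) (z \<alpha>)) (\<Sum>\<alpha>\<in>B. smul (e k \<alpha>) (z \<alpha>)))"
    by (simp add: ip_self_eq)
  also have "\<dots> = (\<Sum>k<n. \<Sum>\<alpha>\<in>B. \<Sum>\<beta>\<in>B. (e k \<alpha> * cnj (e k \<beta>)) * ip (z \<alpha>) (z \<beta>))"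
    by (simp only: expand)
  also have "\<dots> = (\<Sum>\<alpha>\<in>B. \<Sum>\<beta>\<in>B. (\<Sum>k<n. e k \<alpha> * cnj (e k \<beta>)) * ip (z \<alpha>) (z \<beta>))"
    by (simp add: sum.swap[of _ "{..<n}"] sum_distrib_right)
  also have "\<dots> = (\<Sum>\<alpha>\<in>B. \<Sum>\<beta>\<in>B. if \<alpha> = \<beta> then of_nat n * ip (z \<alpha>) (z \<beta>) else 0)"
    by (intro sum.cong refl) (simp add: orth)
  also have "\<dots> = complex_of_real (real n * (\<Sum>\<alpha>\<in>B. (N (z \<alpha>))\<^sup>2))"
    using assms(1) by (simp add: sum.delta ip_self_eq sum_distrib_left)
  finally show ?thesis
    by (simp only: of_real_eq_iff)
qed


lemma parseval_le:
  assumes "finite B" "n > 0"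
    and orth: "\<And>\<alpha> \<beta>. \<alpha> \<in> B \<Longrightarrow> \<beta> \<in> B \<Longrightarrow>
      (\<Sum>k<n. e k \<alpha> * cnj (e k \<beta>)) = (if \<alpha> = \<beta> then of_nat n else 0)"
    and coeff: "\<And>k. k < n \<Longrightarrow>
      N (\<Sum>\<alpha>\<in>B. smul (e k \<alpha>) (y \<alpha>)) \<le> K * N (\<Sum>\<alpha>\<in>B. smul (e k \<alpha>) (z \<alpha>))"
  shows "(\<Sum>\<alpha>\<in>B. (N (y \<alpha>))\<^sup>2) \<le> K\<^sup>2 * (\<Sum>\<alpha>\<in>B. (N (z \<alpha>))\<^sup>2)"
proof -
  have "real n * (\<Sum>\<alpha>\<in>B. (N (y \<alpha>))\<^sup>2) = (\<Sum>k<n. (N (\<Sum>\<alpha>\<in>B. smul (e k \<alpha>) (y \<alpha>)))\<^sup>2)"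
    by (rule parseval[OF assms(1) orth, symmetric])
  also have "\<dots> \<le> (\<Sum>k<n. (K * N (\<Sum>\<alpha>\<in>B. smul (e k \<alpha>) (z \<alpha>)))\<^sup>2)"
    using coeff N_nonneg by (intro sum_mono power_mono) auto
  also have "\<dots> = real n * (K\<^sup>2 * (\<Sum>\<alpha>\<in>B. (N (z \<alpha>))\<^sup>2))"
    by (simp add: power_mult_distrib parseval[OF assms(1) orth] mult_ac flip: sum_distrib_left)
  finally show ?thesis
    using \<open>n > 0\<close> by simp
qed
end


lemma opnorm_le:
  assumes "x\<^sub>0 \<in> V" "hnorm ip x\<^sub>0 \<le> 1"
    and "\<And>x. x \<in> V \<Longrightarrow> hnorm ip x \<le> 1 \<Longrightarrow> hnorm ip (B x) \<le> K"
  shows "opnorm V ip B \<le> K"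
  unfolding opnorm_def using assms by (intro cSup_least) auto

lemma hnorm_le_opnorm:
  assumes "K \<ge> 0" and bound: "\<And>x. x \<in> V \<Longrightarrow> hnorm ip (B x) \<le> K * hnorm ip x"
    and "x \<in> V" "hnorm ip x \<le> 1"
  shows "hnorm ip (B x) \<le> opnorm V ip B"
  unfolding opnorm_def
proof (rule cSup_upper)
  have "hnorm ip (B y) \<le> K" if "y \<in> V" "hnorm ip y \<le> 1" for y
    using bound[OF that(1)] mult_left_mono[OF that(2) \<open>K \<ge> 0\<close>] by simp
  then show "bdd_above ((\<lambda>x. hnorm ip (B x)) ` {x \<in> V. hnorm ip x \<le> 1})"
    by (intro bdd_aboveI[where M = K]) auto
qed (use assms in auto)

context complex_inner_space
begin

lemma N_le_opnorm_mult:
  assumes hom: "\<And>a x. B (smul a x) = smul a (B x)" and bound: "\<And>x. N (B x) \<le> K * N x"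
  shows "N (B x) \<le> opnorm UNIV ip B * N x"
proof (cases "x = 0")
  case True
  then show ?thesis
    using hom[of 0 0] by simp
next
  case False
  then have Nx: "N x > 0"
    using N_nonneg[of x] N_eq_0_iff[of x] by linarith
  define y where "y = smul (complex_of_real (1 / N x)) x"
  have Ny: "N y = 1"
    using Nx by (simp add: y_def N_smul norm_divide)
  have "N (B y) \<le> opnorm UNIV ip B"
  proof (rule hnorm_le_opnorm[where K = "\<bar>K\<bar>"])
    show "N (B z) \<le> \<bar>K\<bar> * N z" for z
      using bound[of z] mult_right_mono[OF abs_ge_self[of K] N_nonneg[of z]] by linarith
  qed (use Ny in auto)
  moreover have "N (B y) = N (B x) / N x"
    using Nx by (simp add: y_def hom N_smul norm_divide)
  ultimately show ?thesis
    using Nx by (simp add: field_simps)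
qed

definition lin_contraction :: "('h \<Rightarrow> 'h) \<Rightarrow> bool" where
  "lin_contraction B \<longleftrightarrow>
     (\<forall>x y. B (x + y) = B x + B y) \<and> (\<forall>a x. B (smul a x) = smul a (B x)) \<and> (\<forall>x. N (B x) \<le> N x)"

lemma lin_contraction_if_opnorm_le_1:
  assumes "bounded_op UNIV smul ip B" "opnorm UNIV ip B \<le> 1"
  shows "lin_contraction B"
proof -
  obtain K where bound: "\<And>x. N (B x) \<le> K * N x"
    and add: "\<And>x y. B (x + y) = B x + B y" and hom: "\<And>a x. B (smul a x) = smul a (B x)"
    using assms(1) unfolding bounded_op_def by auto
  have "N (B x) \<le> N x" for x
    using N_le_opnorm_mult[OF hom bound, of x] mult_right_mono[OF assms(2) N_nonneg[of x]]
    by simp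
  then show ?thesis
    using add hom by (simp add: lin_contraction_def)
qed

lemma lin_contraction_add: "lin_contraction B \<Longrightarrow> B (x + y) = B x + B y"
  by (simp add: lin_contraction_def)

lemma lin_contraction_smul: "lin_contraction B \<Longrightarrow> B (smul a x) = smul a (B x)"
  by (simp add: lin_contraction_def)

lemma lin_contraction_N_le: "lin_contraction B \<Longrightarrow> N (B x) \<le> N x"
  by (simp add: lin_contraction_def)

lemma lin_contraction_zero: "lin_contraction B \<Longrightarrow> B 0 = 0"
  using lin_contraction_smul[of B 0 0] by simp

lemma lin_contraction_sum: "lin_contraction B \<Longrightarrow> B (\<Sum>i\<in>I. f i) = (\<Sum>i\<in>I. B (f i))"
  by (induction I rule: infinite_finite_induct) (auto simp: lin_contraction_add lin_contraction_zero)

lemma lin_contraction_id: "lin_contraction id"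
  by (simp add: lin_contraction_def)

lemma lin_contraction_comp: "lin_contraction B \<Longrightarrow> lin_contraction C \<Longrightarrow> lin_contraction (B \<circ> C)"
  unfolding lin_contraction_def by (auto intro: order_trans)

lemma lin_contraction_funpow: "lin_contraction B \<Longrightarrow> lin_contraction (B ^^ k)"
  by (induction k) (auto simp: lin_contraction_id intro: lin_contraction_comp)

lemma lin_contraction_mono_op:
  assumes "\<And>j. j < d \<Longrightarrow> lin_contraction (S j)"
  shows "lin_contraction (mono_op S d \<beta>)"
proof -
  have foldr: "lin_contraction (foldr (\<lambda>j f. (S j ^^ \<beta> j) \<circ> f) js id)" if "set js \<subseteq> {..<d}" for js
    using that
    by (induction js) (auto simp: lin_contraction_id assms intro!: lin_contraction_comp lin_contraction_funpow)
  show ?thesis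
    unfolding mono_op_def by (rule foldr) auto
qed

lemma poly_op_smul:
  assumes "\<And>j. j < d \<Longrightarrow> lin_contraction (S j)"
  shows "poly_op smul d S F a (smul c v) = smul c (poly_op smul d S F a v)"
  unfolding poly_op_def smul_sum
  by (intro sum.cong refl) (simp add: lin_contraction_smul[OF lin_contraction_mono_op[OF assms]] smul_commute)

lemma N_poly_op_le:
  assumes "\<And>j. j < d \<Longrightarrow> lin_contraction (S j)"
  shows "N (poly_op smul d S F a v) \<le> (\<Sum>\<beta>\<in>F. cmod (a \<beta>)) * N v"
proof -
  have "N (poly_op smul d S F a v) \<le> (\<Sum>\<beta>\<in>F. N (smul (a \<beta>) (mono_op S d \<beta> v)))"
    unfolding poly_op_def by (rule N_sum_le)
  also have "\<dots> \<le> (\<Sum>\<beta>\<in>F. cmod (a \<beta>) * N v)"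
    by (intro sum_mono)
      (simp add: N_smul mult_left_mono lin_contraction_N_le[OF lin_contraction_mono_op[OF assms]])
  finally show ?thesis
    by (simp add: sum_distrib_right)
qed

end

definition multi_box :: "nat \<Rightarrow> nat \<Rightarrow> nat \<Rightarrow> (nat \<Rightarrow> nat) set" where
  "multi_box d lo hi = {\<alpha> \<in> multi_idx d. \<forall>j<d. lo \<le> \<alpha> j \<and> \<alpha> j < hi}"

lemma multi_box_subset_multi_idx: "multi_box d lo hi \<subseteq> multi_idx d"
  by (auto simp: multi_box_def)

lemma multi_box_mono: "hi \<le> hi' \<Longrightarrow> multi_box d lo hi \<subseteq> multi_box d lo hi'"
  by (auto simp: multi_box_def)

lemma bij_betw_restrict_multi_box:
  "bij_betw (\<lambda>\<alpha>. restrict \<alpha> {..<d}) (multi_box d lo hi) (PiE {..<d} (\<lambda>_. {lo..<hi}))"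
proof (rule bij_betw_imageI)
  show "inj_on (\<lambda>\<alpha>. restrict \<alpha> {..<d}) (multi_box d lo hi)"
  proof (rule inj_onI, rule ext)
    fix \<alpha> \<beta> j
    assume "\<alpha> \<in> multi_box d lo hi" "\<beta> \<in> multi_box d lo hi" "restrict \<alpha> {..<d} = restrict \<beta> {..<d}"
    then show "\<alpha> j = \<beta> j"
      by (cases "j < d") (metis lessThan_iff restrict_apply', auto simp: multi_box_def multi_idx_def)
  qed
  show "(\<lambda>\<alpha>. restrict \<alpha> {..<d}) ` multi_box d lo hi = PiE {..<d} (\<lambda>_. {lo..<hi})"
  proof (intro equalityI subsetI)
    fix f
    assume "f \<in> (\<lambda>\<alpha>. restrict \<alpha> {..<d}) ` multi_box d lo hi"
    then obtain \<alpha> where "\<alpha> \<in> multi_box d lo hi" "f = restrict \<alpha> {..<d}"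
      by blast
    then show "f \<in> PiE {..<d} (\<lambda>_. {lo..<hi})"
      by (simp add: restrict_PiE_iff multi_box_def)
  next
    fix f
    assume f: "f \<in> PiE {..<d} (\<lambda>_. {lo..<hi})"
    define g where "g j = (if j < d then f j else 0)" for j
    have "g \<in> multi_box d lo hi"
      using f by (auto simp: g_def multi_box_def multi_idx_def PiE_def)
    moreover have "f = restrict g {..<d}"
      using f by (auto simp: g_def PiE_def extensional_def)
    ultimately show "f \<in> (\<lambda>\<alpha>. restrict \<alpha> {..<d}) ` multi_box d lo hi"
      by blast
  qed
qed

lemma finite_multi_box: "finite (multi_box d lo hi)"
  using bij_betw_finite[OF bij_betw_restrict_multi_box] by (simp add: finite_PiE)

lemma card_multi_box: "card (multi_box d lo hi) = (hi - lo) ^ d"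
  using bij_betw_same_card[OF bij_betw_restrict_multi_box] by (simp add: card_PiE)

lemma finite_subset_multi_box:
  assumes "finite G" "G \<subseteq> multi_idx d"
  obtains n where "n > 0" "G \<subseteq> multi_box d 0 n"
proof
  show "G \<subseteq> multi_box d 0 (Suc (\<Sum>\<alpha>\<in>G. \<Sum>j<d. \<alpha> j))"
  proof
    fix \<alpha>
    assume "\<alpha> \<in> G"
    have "\<alpha> j \<le> (\<Sum>\<alpha>\<in>G. \<Sum>j<d. \<alpha> j)" if "j < d" for j
    proof -
      have "\<alpha> j \<le> (\<Sum>j<d. \<alpha> j)"
        using that by (intro member_le_sum) auto
      also have "\<dots> \<le> (\<Sum>\<alpha>\<in>G. \<Sum>j<d. \<alpha> j)"
        using \<open>\<alpha> \<in> G\<close> assms(1) by (intro member_le_sum[where f = "\<lambda>\<alpha>. \<Sum>j<d. \<alpha> j"]) auto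
      finally show ?thesis .
    qed
    then show "\<alpha> \<in> multi_box d 0 (Suc (\<Sum>\<alpha>\<in>G. \<Sum>j<d. \<alpha> j))"
      using \<open>\<alpha> \<in> G\<close> assms(2) by (auto simp: multi_box_def less_Suc_eq_le)
  qed
qed simp

lemma sum_multi_box_shift:
  fixes x :: "(nat \<Rightarrow> nat) \<Rightarrow> 'a::zero" and g :: "(nat \<Rightarrow> nat) \<Rightarrow> 'a \<Rightarrow> 'b::comm_monoid_add"
  assumes \<beta>: "\<beta> \<in> multi_box d 0 D"
    and x: "\<And>\<gamma>. \<gamma> \<notin> multi_box d 0 n \<Longrightarrow> x \<gamma> = 0" and g: "\<And>\<alpha>. g \<alpha> 0 = 0"
  shows "(\<Sum>\<alpha>\<in>multi_box d 0 (n + D). if \<forall>j<d. \<beta> j \<le> \<alpha> j then g \<alpha> (x (\<lambda>j. \<alpha> j - \<beta> j)) else 0)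
       = (\<Sum>\<gamma>\<in>multi_box d 0 n. g (\<beta> + \<gamma>) (x \<gamma>))"
    (is "sum ?G _ = _")
proof -
  have "sum ?G (multi_box d 0 (n + D)) = sum ?G ((\<lambda>\<gamma>. \<beta> + \<gamma>) ` multi_box d 0 n)"
  proof (rule sum.mono_neutral_right[OF finite_multi_box])
    show "(\<lambda>\<gamma>. \<beta> + \<gamma>) ` multi_box d 0 n \<subseteq> multi_box d 0 (n + D)"
      using \<beta> by (fastforce simp: multi_box_def multi_idx_def)
    show "\<forall>\<alpha>\<in>multi_box d 0 (n + D) - (\<lambda>\<gamma>. \<beta> + \<gamma>) ` multi_box d 0 n. ?G \<alpha> = 0"
    proof
      fix \<alpha>
      assume \<alpha>: "\<alpha> \<in> multi_box d 0 (n + D) - (\<lambda>\<gamma>. \<beta> + \<gamma>) ` multi_box d 0 n"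
      show "?G \<alpha> = 0"
      proof (cases "\<forall>j<d. \<beta> j \<le> \<alpha> j")
        case True
        have "\<alpha> = \<beta> + (\<lambda>j. \<alpha> j - \<beta> j)"
        proof
          fix j
          show "\<alpha> j = (\<beta> + (\<lambda>j. \<alpha> j - \<beta> j)) j"
            using True \<alpha> \<beta> by (cases "j < d") (auto simp: multi_box_def multi_idx_def)
        qed
        then have "(\<lambda>j. \<alpha> j - \<beta> j) \<notin> multi_box d 0 n"
          using \<alpha> by (metis DiffD2 image_eqI)
        then show ?thesis
          using True x g by simp
      next
        case False
        then show ?thesis
          by (rule if_not_P)
      qed
    qed
  qed
  also have "\<dots> = (\<Sum>\<gamma>\<in>multi_box d 0 n. ?G (\<beta> + \<gamma>))"
    by (subst sum.reindex) (auto simp: inj_on_def fun_eq_iff)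
  also have "\<dots> = (\<Sum>\<gamma>\<in>multi_box d 0 n. g (\<beta> + \<gamma>) (x \<gamma>))"
    by (intro sum.cong refl) (simp add: fun_eq_iff)
  finally show ?thesis .
qed


section \<open>Characters of a box of multi-indices\<close>

definition multi_pow :: "nat \<Rightarrow> (nat \<Rightarrow> complex) \<Rightarrow> (nat \<Rightarrow> nat) \<Rightarrow> complex" where
  "multi_pow d z \<alpha> = (\<Prod>j<d. z j ^ \<alpha> j)"

lemma multi_pow_add: "multi_pow d z (\<alpha> + \<beta>) = multi_pow d z \<alpha> * multi_pow d z \<beta>"
  by (simp add: multi_pow_def power_add prod.distrib)

lemma norm_multi_pow: "cmod (multi_pow d z \<alpha>) = (\<Prod>j<d. cmod (z j) ^ \<alpha> j)"
  by (simp add: multi_pow_def prod_norm[symmetric] norm_power)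

definition radix_code :: "nat \<Rightarrow> nat \<Rightarrow> (nat \<Rightarrow> nat) \<Rightarrow> nat" where
  "radix_code d m \<alpha> = (\<Sum>j<d. \<alpha> j * m ^ j)"

lemma radix_code_less:
  assumes "\<And>j. j < d \<Longrightarrow> \<alpha> j < m"
  shows "radix_code d m \<alpha> < m ^ d"
  using assms
proof (induction d)
  case 0
  then show ?case
    by (simp add: radix_code_def)
next
  case (Suc d)
  have "radix_code (Suc d) m \<alpha> = radix_code d m \<alpha> + \<alpha> d * m ^ d"
    by (simp add: radix_code_def)
  also have "\<dots> < Suc (\<alpha> d) * m ^ d"
    using Suc by simp
  also have "\<dots> \<le> m * m ^ d"
    using Suc.prems[of d] by (intro mult_right_mono) auto
  finally show ?case
    by simp
qed

lemma radix_code_eq_imp_eq: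
  assumes "\<And>j. j < d \<Longrightarrow> \<alpha> j < m" "\<And>j. j < d \<Longrightarrow> \<beta> j < m"
    and "radix_code d m \<alpha> = radix_code d m \<beta>" "j < d"
  shows "\<alpha> j = \<beta> j"
  using assms
proof (induction d)
  case 0
  then show ?case
    by simp
next
  case (Suc d)
  have less: "radix_code d m \<alpha> < m ^ d" "radix_code d m \<beta> < m ^ d"
    using Suc.prems by (auto intro!: radix_code_less)
  then have "m ^ d > 0"
    by (metis gr_zeroI not_less0)
  have eq: "radix_code d m \<alpha> + \<alpha> d * m ^ d = radix_code d m \<beta> + \<beta> d * m ^ d"
    using Suc.prems(3) by (simp add: radix_code_def)
  have "\<alpha> d = (radix_code d m \<alpha> + \<alpha> d * m ^ d) div m ^ d"
    using less(1) \<open>m ^ d > 0\<close> by simp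
  also have "\<dots> = \<beta> d"
    unfolding eq using less(2) \<open>m ^ d > 0\<close> by simp
  finally have "\<alpha> d = \<beta> d" .
  with eq have "radix_code d m \<alpha> = radix_code d m \<beta>"
    by simp
  with Suc \<open>\<alpha> d = \<beta> d\<close> show ?case
    by (cases "j = d") auto
qed

lemma inj_on_radix_code: "inj_on (radix_code d m) (multi_box d 0 m)"
proof (rule inj_onI, rule ext)
  fix \<alpha> \<beta> j
  assume "\<alpha> \<in> multi_box d 0 m" "\<beta> \<in> multi_box d 0 m" "radix_code d m \<alpha> = radix_code d m \<beta>"
  then show "\<alpha> j = \<beta> j"
    using radix_code_eq_imp_eq[of d \<alpha> m \<beta> j]
    by (cases "j < d") (auto simp: multi_box_def multi_idx_def)
qed

lemma unit_root_powers_inj_on: "inj_on (\<lambda>a. cis (2 * pi / n) ^ a) {..<n}"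
proof (cases "n = 0")
  case False
  have "cis (2 * pi / n) ^ a = cis (2 * pi * real a / real n)" for a
    unfolding Complex.DeMoivre by (simp add: field_simps)
  then show ?thesis
    using bij_betw_imp_inj_on[OF Complex.bij_betw_roots_unity[of n]] False by simp
qed simp

lemma unit_root_powers_orthogonal:
  assumes "a < n" "b < n"
  shows "(\<Sum>k<n. (cis (2 * pi / n) ^ a) ^ k * cnj ((cis (2 * pi / n) ^ b) ^ k))
       = (if a = b then of_nat n else 0)"
proof -
  have n: "n > 0"
    using assms by simp
  define \<zeta> where "\<zeta> = cis (2 * pi / n)"
  define w where "w = \<zeta> ^ a / \<zeta> ^ b"
  have "(\<zeta> ^ a) ^ k * cnj ((\<zeta> ^ b) ^ k) = w ^ k" for k
    by (simp add: w_def \<zeta>_def cis_cnj power_divide divide_inverse power_mult_distrib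
        flip: cis_inverse power_inverse)
  then have sum_eq: "(\<Sum>k<n. (\<zeta> ^ a) ^ k * cnj ((\<zeta> ^ b) ^ k)) = (\<Sum>k<n. w ^ k)"
    by simp
  show ?thesis
    unfolding \<zeta>_def[symmetric] sum_eq
  proof (cases "a = b")
    case True
    have "\<zeta> \<noteq> 0"
      by (simp add: \<zeta>_def)
    with True show "(\<Sum>k<n. w ^ k) = (if a = b then of_nat n else 0)"
      by (simp add: w_def)
  next
    case False
    have "\<zeta> ^ a \<noteq> \<zeta> ^ b"
      using False assms inj_onD[OF unit_root_powers_inj_on[of n], of a b] by (auto simp: \<zeta>_def)
    then have "w \<noteq> 1"
      by (simp add: w_def \<zeta>_def)
    have "\<zeta> ^ n = 1"
      using n by (simp add: \<zeta>_def Complex.DeMoivre)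
    then have "(\<zeta> ^ c) ^ n = 1" for c
      by (metis mult.commute power_mult power_one)
    then have "w ^ n = 1"
      by (simp add: w_def power_divide)
    then show "(\<Sum>k<n. w ^ k) = (if a = b then of_nat n else 0)"
      using False \<open>w \<noteq> 1\<close> by (simp add: geometric_sum)
  qed
qed

text \<open>Orthogonality of the monomials at the points \<open>torus_point d m k\<close>, \<open>k < m\<^sup>d\<close>, only
  needs the mixed-radix encoding of the box \<open>[0,m)\<^sup>d\<close> into \<open>[0,m\<^sup>d)\<close> to be injective.\<close>

definition torus_point :: "nat \<Rightarrow> nat \<Rightarrow> nat \<Rightarrow> nat \<Rightarrow> complex" where
  "torus_point d m k j = cis (2 * pi / real (m ^ d)) ^ (k * m ^ j)"

lemma norm_torus_point [simp]: "cmod (torus_point d m k j) = 1"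
  by (simp add: torus_point_def norm_power)

lemma multi_pow_torus_point:
  "multi_pow d (torus_point d m k) \<alpha> = (cis (2 * pi / real (m ^ d)) ^ radix_code d m \<alpha>) ^ k"
  by (simp add: multi_pow_def torus_point_def radix_code_def sum_distrib_right power_sum
      prod_power_distrib mult_ac flip: power_mult)

lemma multi_pow_torus_orthogonal:
  assumes "\<alpha> \<in> multi_box d 0 m" "\<beta> \<in> multi_box d 0 m"
  shows "(\<Sum>k<m ^ d. multi_pow d (torus_point d m k) \<alpha> * cnj (multi_pow d (torus_point d m k) \<beta>))
       = (if \<alpha> = \<beta> then of_nat (m ^ d) else 0)"
proof -
  have "radix_code d m \<alpha> < m ^ d" "radix_code d m \<beta> < m ^ d"
    using assms by (auto simp: multi_box_def intro!: radix_code_less)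
  then have "(\<Sum>k<m ^ d. multi_pow d (torus_point d m k) \<alpha> * cnj (multi_pow d (torus_point d m k) \<beta>))
      = (if radix_code d m \<alpha> = radix_code d m \<beta> then of_nat (m ^ d) else 0)"
    unfolding multi_pow_torus_point by (rule unit_root_powers_orthogonal)
  moreover have "radix_code d m \<alpha> = radix_code d m \<beta> \<longleftrightarrow> \<alpha> = \<beta>"
    using inj_onD[OF inj_on_radix_code] assms by auto
  ultimately show ?thesis
    by simp
qed

abbreviation poly_sup :: "nat \<Rightarrow> (nat \<Rightarrow> nat) set \<Rightarrow> ((nat \<Rightarrow> nat) \<Rightarrow> complex) \<Rightarrow> real" where
  "poly_sup d F a \<equiv> (SUP z\<in>polydisc d. cmod (poly_eval d F a z))"

definition twist_coeffs ::
  "nat \<Rightarrow> (nat \<Rightarrow> complex) \<Rightarrow> ((nat \<Rightarrow> nat) \<Rightarrow> complex) \<Rightarrow> (nat \<Rightarrow> nat) \<Rightarrow> complex" where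
  "twist_coeffs d \<omega> a \<beta> = a \<beta> * multi_pow d \<omega> \<beta>"

lemma poly_eval_twist_coeffs:
  "poly_eval d F (twist_coeffs d \<omega> a) z = poly_eval d F a (\<lambda>j. \<omega> j * z j)"
  by (simp add: poly_eval_def twist_coeffs_def multi_pow_def power_mult_distrib prod.distrib mult_ac)

lemma norm_poly_eval_le:
  assumes "z \<in> polydisc d"
  shows "cmod (poly_eval d F a z) \<le> (\<Sum>\<beta>\<in>F. cmod (a \<beta>))"
proof -
  have z: "cmod (z j) \<le> 1" if "j < d" for j
    using assms that unfolding polydisc_def by (auto intro: less_imp_le)
  have pow: "cmod (multi_pow d z \<beta>) \<le> 1" for \<beta>
    unfolding norm_multi_pow by (rule prod_le_1) (simp add: z power_le_one)
  have "poly_eval d F a z = (\<Sum>\<beta>\<in>F. a \<beta> * multi_pow d z \<beta>)"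
    by (simp add: poly_eval_def multi_pow_def)
  also have "cmod \<dots> \<le> (\<Sum>\<beta>\<in>F. cmod (a \<beta> * multi_pow d z \<beta>))"
    by (rule norm_sum)
  also have "\<dots> \<le> (\<Sum>\<beta>\<in>F. cmod (a \<beta>))"
    by (rule sum_mono) (simp add: norm_mult mult_left_le pow)
  finally show ?thesis .
qed

lemma bdd_above_poly_eval: "bdd_above ((\<lambda>z. cmod (poly_eval d F a z)) ` polydisc d)"
  by (rule bdd_aboveI[where M = "\<Sum>\<beta>\<in>F. cmod (a \<beta>)"]) (auto intro: norm_poly_eval_le)

lemma zero_in_polydisc: "(\<lambda>_. 0) \<in> polydisc d"
  by (simp add: polydisc_def)

lemma poly_sup_nonneg: "0 \<le> poly_sup d F a"
  by (rule cSUP_upper2[OF bdd_above_poly_eval zero_in_polydisc]) simp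

lemma poly_sup_twist_coeffs_le:
  assumes "\<And>j. cmod (\<omega> j) = 1"
  shows "poly_sup d F (twist_coeffs d \<omega> a) \<le> poly_sup d F a"
proof (rule cSUP_least)
  fix z
  assume "z \<in> polydisc d"
  then have "(\<lambda>j. \<omega> j * z j) \<in> polydisc d"
    using assms by (simp add: polydisc_def norm_mult)
  then show "cmod (poly_eval d F (twist_coeffs d \<omega> a) z) \<le> poly_sup d F a"
    unfolding poly_eval_twist_coeffs by (rule cSUP_upper[OF _ bdd_above_poly_eval])
qed (use zero_in_polydisc in blast)


section \<open>The multishift with constant weights\<close>

context complex_inner_space
begin

lemma hnorm_l2_eq: "hnorm (l2_ip ip d) y = sqrt (infsum (\<lambda>\<alpha>. (N (y \<alpha>))\<^sup>2) (multi_idx d))"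
proof -
  have "l2_ip ip d y y = complex_of_real (infsum (\<lambda>\<alpha>. (N (y \<alpha>))\<^sup>2) (multi_idx d))"
    unfolding l2_ip_def ip_self_eq by (rule infsum_complex_of_real)
  then show ?thesis
    by (simp only: hnorm_def Re_complex_of_real)
qed

lemma hnorm_l2_nonneg: "hnorm (l2_ip ip d) y \<ge> 0"
  by (simp add: hnorm_l2_eq infsum_nonneg)

end

locale contraction_tuple = complex_inner_space smul ip
  for smul :: "complex \<Rightarrow> 'h::ab_group_add \<Rightarrow> 'h" and ip +
  fixes d :: nat and A :: "nat \<Rightarrow> 'h \<Rightarrow> 'h"
  assumes lin_contraction_A: "j < d \<Longrightarrow> lin_contraction (A j)"
begin

abbreviation T :: "nat \<Rightarrow> ((nat \<Rightarrow> nat) \<Rightarrow> 'h) \<Rightarrow> (nat \<Rightarrow> nat) \<Rightarrow> 'h" where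
  "T \<equiv> multishift d (\<lambda>j \<alpha>. A j)"

lemma lin_contraction_mono_op_A: "lin_contraction (mono_op A d \<beta>)"
  by (rule lin_contraction_mono_op[OF lin_contraction_A])

lemma multishift_funpow:
  assumes j: "j < d" and z: "\<And>\<alpha>. \<alpha> \<notin> multi_idx d \<Longrightarrow> z \<alpha> = 0"
  shows "(T j ^^ k) z \<alpha> =
    (if \<alpha> \<in> multi_idx d \<and> k \<le> \<alpha> j then (A j ^^ k) (z (\<alpha>(j := \<alpha> j - k))) else 0)"
proof (induction k arbitrary: \<alpha>)
  case 0
  then show ?case
    using z by auto
next
  case (Suc k)
  let ?\<alpha>' = "\<alpha>(j := \<alpha> j - 1)"
  have "(T j ^^ Suc k) z \<alpha> = (if \<alpha> \<in> multi_idx d \<and> 0 < \<alpha> j then A j ((T j ^^ k) z ?\<alpha>') else 0)"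
    unfolding funpow.simps comp_apply multishift_def[of d _ j "(T j ^^ k) z"] by simp
  moreover have "?\<alpha>' \<in> multi_idx d \<longleftrightarrow> \<alpha> \<in> multi_idx d"
    using j by (auto simp: multi_idx_def)
  moreover have "?\<alpha>'(j := ?\<alpha>' j - k) = \<alpha>(j := \<alpha> j - Suc k)"
    by simp
  moreover have "A j 0 = 0"
    using lin_contraction_zero[OF lin_contraction_A[OF j]] .
  ultimately show ?case
    unfolding Suc.IH[of ?\<alpha>'] by auto
qed

lemma multishift_foldr:
  assumes "distinct js" "set js \<subseteq> {..<d}" and x: "\<And>\<alpha>. \<alpha> \<notin> multi_idx d \<Longrightarrow> x \<alpha> = 0"
  shows "foldr (\<lambda>j f. (T j ^^ \<beta> j) \<circ> f) js id x \<alpha> =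
    (if \<alpha> \<in> multi_idx d \<and> (\<forall>j\<in>set js. \<beta> j \<le> \<alpha> j)
     then foldr (\<lambda>j f. (A j ^^ \<beta> j) \<circ> f) js id (x (\<lambda>i. if i \<in> set js then \<alpha> i - \<beta> i else \<alpha> i))
     else 0)"
  using assms(1,2)
proof (induction js arbitrary: \<alpha>)
  case Nil
  then show ?case
    using x by auto
next
  case (Cons j js)
  let ?z = "foldr (\<lambda>j f. (T j ^^ \<beta> j) \<circ> f) js id x"
  let ?\<alpha>' = "\<alpha>(j := \<alpha> j - \<beta> j)"
  have j: "j < d" "j \<notin> set js"
    using Cons.prems by auto
  have IH: "?z \<gamma> = (if \<gamma> \<in> multi_idx d \<and> (\<forall>j\<in>set js. \<beta> j \<le> \<gamma> j)
     then foldr (\<lambda>j f. (A j ^^ \<beta> j) \<circ> f) js id (x (\<lambda>i. if i \<in> set js then \<gamma> i - \<beta> i else \<gamma> i))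
     else 0)" for \<gamma>
    by (rule Cons.IH) (use Cons.prems in auto)
  have z: "?z \<gamma> = 0" if "\<gamma> \<notin> multi_idx d" for \<gamma>
    unfolding IH using that by simp
  have idx: "?\<alpha>' \<in> multi_idx d \<longleftrightarrow> \<alpha> \<in> multi_idx d"
    using j by (auto simp: multi_idx_def)
  have le: "(\<forall>i\<in>set js. \<beta> i \<le> ?\<alpha>' i) \<longleftrightarrow> (\<forall>i\<in>set js. \<beta> i \<le> \<alpha> i)"
    using j by auto
  have shift: "(\<lambda>i. if i \<in> set js then ?\<alpha>' i - \<beta> i else ?\<alpha>' i)
      = (\<lambda>i. if i \<in> set (j # js) then \<alpha> i - \<beta> i else \<alpha> i)"
    using j by auto
  have "(A j ^^ \<beta> j) 0 = 0"
    using lin_contraction_zero[OF lin_contraction_funpow[OF lin_contraction_A[OF j(1)]]] .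
  have "foldr (\<lambda>j f. (T j ^^ \<beta> j) \<circ> f) (j # js) id x \<alpha> = (T j ^^ \<beta> j) ?z \<alpha>"
    by simp
  also have "\<dots> = (if \<alpha> \<in> multi_idx d \<and> \<beta> j \<le> \<alpha> j then (A j ^^ \<beta> j) (?z ?\<alpha>') else 0)"
    by (rule multishift_funpow[OF j(1) z])
  also have "\<dots> = (if \<alpha> \<in> multi_idx d \<and> (\<forall>i\<in>set (j # js). \<beta> i \<le> \<alpha> i)
     then foldr (\<lambda>j f. (A j ^^ \<beta> j) \<circ> f) (j # js) id
       (x (\<lambda>i. if i \<in> set (j # js) then \<alpha> i - \<beta> i else \<alpha> i))
     else 0)"
    unfolding IH idx le shift using \<open>(A j ^^ \<beta> j) 0 = 0\<close> by auto
  finally show ?case .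
qed

lemma mono_op_multishift:
  assumes x: "\<And>\<alpha>. \<alpha> \<notin> multi_idx d \<Longrightarrow> x \<alpha> = 0"
  shows "mono_op T d \<beta> x \<alpha> =
    (if \<alpha> \<in> multi_idx d \<and> (\<forall>j<d. \<beta> j \<le> \<alpha> j) then mono_op A d \<beta> (x (\<lambda>j. \<alpha> j - \<beta> j)) else 0)"
proof -
  have "mono_op T d \<beta> x \<alpha> = (if \<alpha> \<in> multi_idx d \<and> (\<forall>j\<in>set [0..<d]. \<beta> j \<le> \<alpha> j)
      then mono_op A d \<beta> (x (\<lambda>i. if i \<in> set [0..<d] then \<alpha> i - \<beta> i else \<alpha> i)) else 0)"
    unfolding mono_op_def by (rule multishift_foldr[OF _ _ x]) auto
  moreover have "(\<lambda>i. if i \<in> set [0..<d] then \<alpha> i - \<beta> i else \<alpha> i) = (\<lambda>i. \<alpha> i - \<beta> i)"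
    if "\<alpha> \<in> multi_idx d"
    using that by (auto simp: multi_idx_def)
  ultimately show ?thesis
    by auto
qed

definition convolve ::
  "(nat \<Rightarrow> nat) set \<Rightarrow> ((nat \<Rightarrow> nat) \<Rightarrow> complex) \<Rightarrow> ((nat \<Rightarrow> nat) \<Rightarrow> 'h) \<Rightarrow> (nat \<Rightarrow> nat) \<Rightarrow> 'h" where
  "convolve F a x \<alpha> = (\<Sum>\<beta>\<in>F. smul (a \<beta>)
     (if \<forall>j<d. \<beta> j \<le> \<alpha> j then mono_op A d \<beta> (x (\<lambda>j. \<alpha> j - \<beta> j)) else 0))"

lemma poly_op_multishift:
  assumes "\<And>\<alpha>. \<alpha> \<notin> multi_idx d \<Longrightarrow> x \<alpha> = 0"
  shows "poly_op (l2_smul smul) d T F a x \<alpha> = (if \<alpha> \<in> multi_idx d then convolve F a x \<alpha> else 0)"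
  unfolding poly_op_def sum_fun_apply l2_smul_def convolve_def
  by (auto simp: mono_op_multishift[OF assms] intro!: sum.neutral sum.cong)

lemma convolve_generating_function:
  assumes F: "F \<subseteq> multi_box d 0 D" and x: "\<And>\<gamma>. \<gamma> \<notin> multi_box d 0 n \<Longrightarrow> x \<gamma> = 0"
  shows "(\<Sum>\<alpha>\<in>multi_box d 0 (n + D). smul (multi_pow d \<omega> \<alpha>) (convolve F a x \<alpha>))
       = poly_op smul d A F (twist_coeffs d \<omega> a)
           (\<Sum>\<gamma>\<in>multi_box d 0 (n + D). smul (multi_pow d \<omega> \<gamma>) (x \<gamma>))"
proof -
  let ?e = "multi_pow d \<omega>" and ?B = "multi_box d 0 (n + D)"
  note P = lin_contraction_mono_op_A
  have "poly_op smul d A F (twist_coeffs d \<omega> a) (\<Sum>\<gamma>\<in>?B. smul (?e \<gamma>) (x \<gamma>))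
      = (\<Sum>\<beta>\<in>F. \<Sum>\<gamma>\<in>?B. smul (?e (\<beta> + \<gamma>) * a \<beta>) (mono_op A d \<beta> (x \<gamma>)))"
    unfolding poly_op_def twist_coeffs_def
    by (simp add: lin_contraction_sum[OF P] lin_contraction_smul[OF P] smul_sum smul_smul
        multi_pow_add mult_ac)
  also have "\<dots> = (\<Sum>\<beta>\<in>F. \<Sum>\<gamma>\<in>multi_box d 0 n. smul (?e (\<beta> + \<gamma>) * a \<beta>) (mono_op A d \<beta> (x \<gamma>)))"
    by (intro sum.cong refl sum.mono_neutral_right finite_multi_box multi_box_mono)
      (auto simp: x lin_contraction_zero[OF P])
  also have "\<dots> = (\<Sum>\<beta>\<in>F. \<Sum>\<alpha>\<in>?B. if \<forall>j<d. \<beta> j \<le> \<alpha> j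
      then smul (?e \<alpha> * a \<beta>) (mono_op A d \<beta> (x (\<lambda>j. \<alpha> j - \<beta> j))) else 0)"
  proof (rule sum.cong[OF refl])
    fix \<beta>
    assume "\<beta> \<in> F"
    then show "(\<Sum>\<gamma>\<in>multi_box d 0 n. smul (?e (\<beta> + \<gamma>) * a \<beta>) (mono_op A d \<beta> (x \<gamma>)))
        = (\<Sum>\<alpha>\<in>?B. if \<forall>j<d. \<beta> j \<le> \<alpha> j
            then smul (?e \<alpha> * a \<beta>) (mono_op A d \<beta> (x (\<lambda>j. \<alpha> j - \<beta> j))) else 0)"
      using F
      by (intro sum_multi_box_shift[symmetric, where g = "\<lambda>\<alpha> v. smul (?e \<alpha> * a \<beta>) (mono_op A d \<beta> v)"])
        (auto simp: x lin_contraction_zero[OF P])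
  qed
  also have "\<dots> = (\<Sum>\<alpha>\<in>?B. smul (?e \<alpha>) (convolve F a x \<alpha>))"
    unfolding convolve_def smul_sum
    by (subst sum.swap) (auto intro!: sum.cong simp: smul_smul)
  finally show ?thesis
    by (rule sym)
qed

lemma convolve_box_norm_le:
  assumes F: "F \<subseteq> multi_box d 0 D" and x: "\<And>\<gamma>. \<gamma> \<notin> multi_box d 0 n \<Longrightarrow> x \<gamma> = 0"
    and K: "\<And>\<omega> v. (\<And>j. cmod (\<omega> j) = 1) \<Longrightarrow>
      N (poly_op smul d A F (twist_coeffs d \<omega> a) v) \<le> K * N v"
  shows "(\<Sum>\<alpha>\<in>multi_box d 0 (n + D). (N (convolve F a x \<alpha>))\<^sup>2)
       \<le> K\<^sup>2 * (\<Sum>\<gamma>\<in>multi_box d 0 n. (N (x \<gamma>))\<^sup>2)"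
proof (cases "(n + D) ^ d = 0")
  case True
  then have "multi_box d 0 (n + D) = {}"
    by (auto simp: multi_box_def)
  then show ?thesis
    by (simp add: sum_nonneg)
next
  case False
  define m where "m = n + D"
  let ?e = "\<lambda>k. multi_pow d (torus_point d m k)"
  have "(\<Sum>\<alpha>\<in>multi_box d 0 m. (N (convolve F a x \<alpha>))\<^sup>2)
      \<le> K\<^sup>2 * (\<Sum>\<gamma>\<in>multi_box d 0 m. (N (x \<gamma>))\<^sup>2)"
  proof (rule parseval_le[OF finite_multi_box _ multi_pow_torus_orthogonal])
    show "m ^ d > 0"
      using False by (simp add: m_def)
    fix k
    have "(\<Sum>\<alpha>\<in>multi_box d 0 m. smul (?e k \<alpha>) (convolve F a x \<alpha>))
        = poly_op smul d A F (twist_coeffs d (torus_point d m k) a)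
            (\<Sum>\<gamma>\<in>multi_box d 0 m. smul (?e k \<gamma>) (x \<gamma>))"
      unfolding m_def by (rule convolve_generating_function[OF F x])
    then show "N (\<Sum>\<alpha>\<in>multi_box d 0 m. smul (?e k \<alpha>) (convolve F a x \<alpha>))
        \<le> K * N (\<Sum>\<gamma>\<in>multi_box d 0 m. smul (?e k \<gamma>) (x \<gamma>))"
      using K[of "torus_point d m k"] by simp
  qed
  also have "(\<Sum>\<gamma>\<in>multi_box d 0 m. (N (x \<gamma>))\<^sup>2) = (\<Sum>\<gamma>\<in>multi_box d 0 n. (N (x \<gamma>))\<^sup>2)"
    unfolding m_def by (rule sum.mono_neutral_right[OF finite_multi_box multi_box_mono]) (auto simp: x)
  finally show ?thesis
    unfolding m_def .
qed

lemma convolve_restrict: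
  assumes "\<alpha> \<in> multi_box d 0 n"
  shows "convolve F a x \<alpha> = convolve F a (\<lambda>\<gamma>. if \<gamma> \<in> multi_box d 0 n then x \<gamma> else 0) \<alpha>"
proof -
  have "(\<lambda>j. \<alpha> j - \<beta> j) \<in> multi_box d 0 n" for \<beta>
    using assms by (auto simp: multi_box_def multi_idx_def less_imp_diff_less)
  then show ?thesis
    unfolding convolve_def by presburger
qed

lemma poly_op_multishift_partial_sum_le:
  assumes F: "finite F" "F \<subseteq> multi_idx d"
    and K: "\<And>\<omega> v. (\<And>j. cmod (\<omega> j) = 1) \<Longrightarrow>
      N (poly_op smul d A F (twist_coeffs d \<omega> a) v) \<le> K * N v"
    and x: "x \<in> l2_space ip d" and G: "finite G" "G \<subseteq> multi_idx d"
  shows "(\<Sum>\<alpha>\<in>G. (N (poly_op (l2_smul smul) d T F a x \<alpha>))\<^sup>2)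
       \<le> K\<^sup>2 * infsum (\<lambda>\<alpha>. (N (x \<alpha>))\<^sup>2) (multi_idx d)"
proof -
  obtain D where D: "F \<subseteq> multi_box d 0 D"
    using finite_subset_multi_box[OF F] by blast
  obtain n where n: "G \<subseteq> multi_box d 0 n"
    using finite_subset_multi_box[OF G] by blast
  define x' where "x' \<gamma> = (if \<gamma> \<in> multi_box d 0 n then x \<gamma> else 0)" for \<gamma>
  have x0: "\<And>\<alpha>. \<alpha> \<notin> multi_idx d \<Longrightarrow> x \<alpha> = 0"
    and summable: "(\<lambda>\<alpha>. (N (x \<alpha>))\<^sup>2) summable_on multi_idx d"
    using x by (auto simp: l2_space_def)
  have "poly_op (l2_smul smul) d T F a x \<alpha> = convolve F a x' \<alpha>" if "\<alpha> \<in> G" for \<alpha>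
  proof -
    have "\<alpha> \<in> multi_box d 0 n"
      using that n by blast
    then show ?thesis
      using multi_box_subset_multi_idx[of d 0 n] unfolding x'_def
      by (auto simp: poly_op_multishift[OF x0] intro: convolve_restrict)
  qed
  then have "(\<Sum>\<alpha>\<in>G. (N (poly_op (l2_smul smul) d T F a x \<alpha>))\<^sup>2) = (\<Sum>\<alpha>\<in>G. (N (convolve F a x' \<alpha>))\<^sup>2)"
    by simp
  also have "\<dots> \<le> (\<Sum>\<alpha>\<in>multi_box d 0 (n + D). (N (convolve F a x' \<alpha>))\<^sup>2)"
    using n multi_box_mono[of n "n + D" d 0] by (intro sum_mono2 finite_multi_box) auto
  also have "\<dots> \<le> K\<^sup>2 * (\<Sum>\<gamma>\<in>multi_box d 0 n. (N (x' \<gamma>))\<^sup>2)"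
    by (rule convolve_box_norm_le[OF D _ K]) (simp add: x'_def)
  also have "(\<Sum>\<gamma>\<in>multi_box d 0 n. (N (x' \<gamma>))\<^sup>2) \<le> infsum (\<lambda>\<alpha>. (N (x \<alpha>))\<^sup>2) (multi_idx d)"
    unfolding x'_def
    by (simp, rule finite_sum_le_infsum[OF summable finite_multi_box multi_box_subset_multi_idx]) simp
  finally show ?thesis
    by (simp add: mult_left_mono)
qed

lemma poly_op_multishift_l2:
  assumes F: "finite F" "F \<subseteq> multi_idx d"
    and K: "\<And>\<omega> v. (\<And>j. cmod (\<omega> j) = 1) \<Longrightarrow>
      N (poly_op smul d A F (twist_coeffs d \<omega> a) v) \<le> K * N v"
    and x: "x \<in> l2_space ip d"
  shows "(\<lambda>\<alpha>. (N (poly_op (l2_smul smul) d T F a x \<alpha>))\<^sup>2) summable_on multi_idx d"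
    and "infsum (\<lambda>\<alpha>. (N (poly_op (l2_smul smul) d T F a x \<alpha>))\<^sup>2) (multi_idx d)
       \<le> K\<^sup>2 * infsum (\<lambda>\<alpha>. (N (x \<alpha>))\<^sup>2) (multi_idx d)"
proof -
  note partial = poly_op_multishift_partial_sum_le[OF F K x]
  show summable: "(\<lambda>\<alpha>. (N (poly_op (l2_smul smul) d T F a x \<alpha>))\<^sup>2) summable_on multi_idx d"
    by (rule nonneg_bdd_above_summable_on) (auto intro!: bdd_aboveI partial)
  show "infsum (\<lambda>\<alpha>. (N (poly_op (l2_smul smul) d T F a x \<alpha>))\<^sup>2) (multi_idx d)
      \<le> K\<^sup>2 * infsum (\<lambda>\<alpha>. (N (x \<alpha>))\<^sup>2) (multi_idx d)"
    by (rule infsum_le_finite_sums[OF summable partial])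
qed

lemma hnorm_poly_op_multishift_le:
  assumes F: "finite F" "F \<subseteq> multi_idx d"
    and K: "\<And>\<omega> v. (\<And>j. cmod (\<omega> j) = 1) \<Longrightarrow>
      N (poly_op smul d A F (twist_coeffs d \<omega> a) v) \<le> K * N v"
    and "K \<ge> 0" and x: "x \<in> l2_space ip d"
  shows "hnorm (l2_ip ip d) (poly_op (l2_smul smul) d T F a x) \<le> K * hnorm (l2_ip ip d) x"
proof -
  have "hnorm (l2_ip ip d) (poly_op (l2_smul smul) d T F a x)
      \<le> sqrt (K\<^sup>2 * infsum (\<lambda>\<alpha>. (N (x \<alpha>))\<^sup>2) (multi_idx d))"
    unfolding hnorm_l2_eq using poly_op_multishift_l2(2)[OF F K x] by simp
  also have "\<dots> = K * hnorm (l2_ip ip d) x"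
    using \<open>K \<ge> 0\<close> by (simp add: hnorm_l2_eq real_sqrt_mult)
  finally show ?thesis .
qed

lemma N_poly_op_twist_le_coeff_sum:
  assumes "\<And>j. cmod (\<omega> j) = 1"
  shows "N (poly_op smul d A F (twist_coeffs d \<omega> a) v) \<le> (\<Sum>\<beta>\<in>F. cmod (a \<beta>)) * N v"
proof -
  have "N (poly_op smul d A F (twist_coeffs d \<omega> a) v) \<le> (\<Sum>\<beta>\<in>F. cmod (twist_coeffs d \<omega> a \<beta>)) * N v"
    by (rule N_poly_op_le[OF lin_contraction_A])
  also have "(\<Sum>\<beta>\<in>F. cmod (twist_coeffs d \<omega> a \<beta>)) = (\<Sum>\<beta>\<in>F. cmod (a \<beta>))"
    using assms by (simp add: twist_coeffs_def norm_mult norm_multi_pow)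
  finally show ?thesis .
qed

lemma hnorm_poly_op_multishift_le_coeff_sum:
  assumes "finite F" "F \<subseteq> multi_idx d" "x \<in> l2_space ip d"
  shows "hnorm (l2_ip ip d) (poly_op (l2_smul smul) d T F a x)
       \<le> (\<Sum>\<beta>\<in>F. cmod (a \<beta>)) * hnorm (l2_ip ip d) x"
  by (rule hnorm_poly_op_multishift_le[OF assms(1,2) N_poly_op_twist_le_coeff_sum _ assms(3)])
    (simp_all add: sum_nonneg)

lemma N_poly_op_twist_le_poly_sup:
  assumes vA: "von_neumann_ineq UNIV smul ip d A" and F: "finite F" "F \<subseteq> multi_idx d"
    and \<omega>: "\<And>j. cmod (\<omega> j) = 1"
  shows "N (poly_op smul d A F (twist_coeffs d \<omega> a) v) \<le> poly_sup d F a * N v"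
proof -
  let ?P = "poly_op smul d A F (twist_coeffs d \<omega> a)"
  have "N (?P v) \<le> opnorm UNIV ip ?P * N v"
    by (rule N_le_opnorm_mult[OF poly_op_smul[OF lin_contraction_A] N_poly_op_le[OF lin_contraction_A]])
  moreover have "opnorm UNIV ip ?P \<le> poly_sup d F a"
    using vA F poly_sup_twist_coeffs_le[OF \<omega>] unfolding von_neumann_ineq_def by (meson order_trans)
  ultimately show ?thesis
    using N_nonneg[of v] by (meson mult_right_mono order_trans)
qed

theorem von_neumann_ineq_multishift_if_tuple:
  assumes "von_neumann_ineq UNIV smul ip d A"
  shows "von_neumann_ineq (l2_space ip d) (l2_smul smul) (l2_ip ip d) d T"
  unfolding von_neumann_ineq_def
proof (intro allI impI)
  fix F a
  assume F: "finite F" "F \<subseteq> multi_idx d"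
  show "opnorm (l2_space ip d) (l2_ip ip d) (poly_op (l2_smul smul) d T F a) \<le> poly_sup d F a"
  proof (rule opnorm_le)
    show "(\<lambda>_. 0) \<in> l2_space ip d" "hnorm (l2_ip ip d) (\<lambda>_. 0) \<le> 1"
      by (simp_all add: l2_space_def hnorm_l2_eq)
  next
    fix x
    assume x: "x \<in> l2_space ip d" "hnorm (l2_ip ip d) x \<le> 1"
    have "hnorm (l2_ip ip d) (poly_op (l2_smul smul) d T F a x)
        \<le> poly_sup d F a * hnorm (l2_ip ip d) x"
      by (rule hnorm_poly_op_multishift_le[OF F N_poly_op_twist_le_poly_sup[OF assms F]
            poly_sup_nonneg x(1)])
    also have "\<dots> \<le> poly_sup d F a"
      using x(2) poly_sup_nonneg by (simp add: mult_left_le)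
    finally show "hnorm (l2_ip ip d) (poly_op (l2_smul smul) d T F a x) \<le> poly_sup d F a" .
  qed
qed

section \<open>Recovering the tuple from the multishift\<close>

definition box_vector :: "nat \<Rightarrow> 'h \<Rightarrow> (nat \<Rightarrow> nat) \<Rightarrow> 'h" where
  "box_vector L h \<alpha> =
     (if \<alpha> \<in> multi_box d 0 L then smul (complex_of_real (1 / sqrt (real L ^ d))) h else 0)"

lemma box_vector_l2:
  assumes "L > 0"
  shows "box_vector L h \<in> l2_space ip d" and "hnorm (l2_ip ip d) (box_vector L h) = N h"
proof -
  let ?f = "\<lambda>\<alpha>. (N (box_vector L h \<alpha>))\<^sup>2"
  have vanish: "box_vector L h \<alpha> = 0" if "\<alpha> \<notin> multi_box d 0 L" for \<alpha>
    using that by (simp add: box_vector_def)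
  have "?f summable_on multi_idx d \<longleftrightarrow> ?f summable_on multi_box d 0 L"
    using multi_box_subset_multi_idx by (intro summable_on_cong_neutral) (auto simp: vanish)
  then have "?f summable_on multi_idx d"
    by (simp add: finite_multi_box)
  then show "box_vector L h \<in> l2_space ip d"
    by (auto simp: l2_space_def box_vector_def multi_box_def)
  have "infsum ?f (multi_idx d) = (\<Sum>\<alpha>\<in>multi_box d 0 L. ?f \<alpha>)"
    using multi_box_subset_multi_idx
    by (subst infsum_cong_neutral[where T = "multi_box d 0 L" and g = ?f]) (auto simp: vanish finite_multi_box)
  also have "\<dots> = real (L ^ d) * ((cmod (complex_of_real (1 / sqrt (real L ^ d))))\<^sup>2 * (N h)\<^sup>2)"
    by (simp add: box_vector_def N_smul power_mult_distrib card_multi_box)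
  also have "\<dots> = (N h)\<^sup>2"
    using assms by (simp add: norm_divide power_divide)
  finally show "hnorm (l2_ip ip d) (box_vector L h) = N h"
    using N_nonneg by (simp add: hnorm_l2_eq)
qed

lemma convolve_box_vector:
  assumes F: "F \<subseteq> multi_box d 0 D" and \<alpha>: "\<alpha> \<in> multi_box d D L"
  shows "convolve F a (box_vector L h) \<alpha>
       = smul (complex_of_real (1 / sqrt (real L ^ d))) (poly_op smul d A F a h)"
proof -
  have "(\<forall>j<d. \<beta> j \<le> \<alpha> j) \<and> (\<lambda>j. \<alpha> j - \<beta> j) \<in> multi_box d 0 L" if "\<beta> \<in> F" for \<beta>
    using that F \<alpha> by (fastforce simp: multi_box_def multi_idx_def)
  then show ?thesis
    unfolding convolve_def poly_op_def box_vector_def smul_sum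
    by (intro sum.cong refl) (simp add: lin_contraction_smul[OF lin_contraction_mono_op_A] smul_commute)
qed

lemma sum_inner_box_poly_op_multishift:
  assumes F: "F \<subseteq> multi_box d 0 D" and "L > 0"
  shows "(\<Sum>\<alpha>\<in>multi_box d D L. (N (poly_op (l2_smul smul) d T F a (box_vector L h) \<alpha>))\<^sup>2)
       = (real (L - D) / real L) ^ d * (N (poly_op smul d A F a h))\<^sup>2"
proof -
  have x0: "box_vector L h \<alpha> = 0" if "\<alpha> \<notin> multi_idx d" for \<alpha>
    using box_vector_l2(1)[OF \<open>L > 0\<close>] that by (simp add: l2_space_def)
  have "(\<Sum>\<alpha>\<in>multi_box d D L. (N (poly_op (l2_smul smul) d T F a (box_vector L h) \<alpha>))\<^sup>2)
      = (\<Sum>\<alpha>\<in>multi_box d D L.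
          (N (smul (complex_of_real (1 / sqrt (real L ^ d))) (poly_op smul d A F a h)))\<^sup>2)"
    using multi_box_subset_multi_idx[of d D L]
    by (intro sum.cong refl) (auto simp: poly_op_multishift[OF x0] convolve_box_vector[OF F])
  also have "\<dots> = real ((L - D) ^ d)
      * ((cmod (complex_of_real (1 / sqrt (real L ^ d))))\<^sup>2 * (N (poly_op smul d A F a h))\<^sup>2)"
    by (simp add: N_smul power_mult_distrib card_multi_box)
  also have "\<dots> = (real (L - D) / real L) ^ d * (N (poly_op smul d A F a h))\<^sup>2"
    using \<open>L > 0\<close> by (simp add: norm_divide power_divide)
  finally show ?thesis .
qed

lemma N_poly_op_le_via_multishift:
  assumes F: "F \<subseteq> multi_box d 0 D" "D > 0"
    and bound: "\<And>x. x \<in> l2_space ip d \<Longrightarrow> hnorm (l2_ip ip d) x \<le> 1 \<Longrightarrow>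
      hnorm (l2_ip ip d) (poly_op (l2_smul smul) d T F a x) \<le> M"
    and h: "N h \<le> 1"
  shows "(real n / real (Suc n)) ^ d * (N (poly_op smul d A F a h))\<^sup>2 \<le> M\<^sup>2"
proof -
  define L where "L = D * Suc n"
  define y where "y = poly_op (l2_smul smul) d T F a (box_vector L h)"
  have L: "L > 0"
    using F(2) by (simp add: L_def)
  have "finite F" "F \<subseteq> multi_idx d"
    using F(1) finite_multi_box multi_box_subset_multi_idx by (blast intro: finite_subset)+
  note x = box_vector_l2[OF L, of h]
  have "L - D = D * n"
    by (simp add: L_def)
  then have "real (L - D) / real L = (real D * real n) / (real D * real (Suc n))"
    by (simp only: L_def of_nat_mult)
  also have "\<dots> = real n / real (Suc n)"
    using F(2) by (intro mult_divide_mult_cancel_left) simp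
  finally have ratio: "real (L - D) / real L = real n / real (Suc n)" .
  then have "(real n / real (Suc n)) ^ d * (N (poly_op smul d A F a h))\<^sup>2
      = (\<Sum>\<alpha>\<in>multi_box d D L. (N (y \<alpha>))\<^sup>2)"
    using sum_inner_box_poly_op_multishift[OF F(1) L] by (simp only: ratio y_def)
  also have "\<dots> \<le> infsum (\<lambda>\<alpha>. (N (y \<alpha>))\<^sup>2) (multi_idx d)"
    unfolding y_def
    by (rule finite_sum_le_infsum[OF poly_op_multishift_l2(1)[OF \<open>finite F\<close> \<open>F \<subseteq> multi_idx d\<close>
          N_poly_op_twist_le_coeff_sum x(1)] finite_multi_box multi_box_subset_multi_idx])
      simp_all
  also have "\<dots> = (hnorm (l2_ip ip d) y)\<^sup>2"
    by (simp add: hnorm_l2_eq infsum_nonneg)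
  also have "\<dots> \<le> M\<^sup>2"
    using bound[OF x(1)] x(2) h hnorm_l2_nonneg by (intro power_mono) (auto simp: y_def)
  finally show ?thesis .
qed

theorem von_neumann_ineq_tuple_if_multishift:
  assumes vT: "von_neumann_ineq (l2_space ip d) (l2_smul smul) (l2_ip ip d) d T"
  shows "von_neumann_ineq UNIV smul ip d A"
  unfolding von_neumann_ineq_def
proof (intro allI impI)
  fix F a
  assume F: "finite F" "F \<subseteq> multi_idx d"
  obtain D where D: "D > 0" "F \<subseteq> multi_box d 0 D"
    using finite_subset_multi_box[OF F] by blast
  have bound: "hnorm (l2_ip ip d) (poly_op (l2_smul smul) d T F a x) \<le> poly_sup d F a"
    if "x \<in> l2_space ip d" "hnorm (l2_ip ip d) x \<le> 1" for x
  proof -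
    have "hnorm (l2_ip ip d) (poly_op (l2_smul smul) d T F a x)
        \<le> opnorm (l2_space ip d) (l2_ip ip d) (poly_op (l2_smul smul) d T F a)"
      by (rule hnorm_le_opnorm[OF _ hnorm_poly_op_multishift_le_coeff_sum[OF F]])
        (use that in \<open>simp_all add: sum_nonneg\<close>)
    also have "\<dots> \<le> poly_sup d F a"
      using vT F unfolding von_neumann_ineq_def by blast
    finally show ?thesis .
  qed
  show "opnorm UNIV ip (poly_op smul d A F a) \<le> poly_sup d F a"
  proof (rule opnorm_le[of 0])
    fix h
    assume "h \<in> UNIV" "N h \<le> 1"
    let ?c = "(N (poly_op smul d A F a h))\<^sup>2"
    have "(\<lambda>n. (real n / real (Suc n)) ^ d * ?c) \<longlonglongrightarrow> 1 ^ d * ?c"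
      by (intro tendsto_mult_right tendsto_power LIMSEQ_n_over_Suc_n)
    moreover have "(real n / real (Suc n)) ^ d * ?c \<le> (poly_sup d F a)\<^sup>2" for n
      by (rule N_poly_op_le_via_multishift[OF D(2,1) bound \<open>N h \<le> 1\<close>])
    ultimately have "1 ^ d * ?c \<le> (poly_sup d F a)\<^sup>2"
      by (intro LIMSEQ_le_const2) blast+
    then have "?c \<le> (poly_sup d F a)\<^sup>2"
      by simp
    then show "N (poly_op smul d A F a h) \<le> poly_sup d F a"
      using poly_sup_nonneg by (rule power2_le_imp_le)
  qed auto
qed

end

theorem proposition3p6:
  fixes smul :: "complex \<Rightarrow> 'h::ab_group_add \<Rightarrow> 'h"
    and ip :: "'h \<Rightarrow> 'h \<Rightarrow> complex"
    and d :: nat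
    and A :: "nat \<Rightarrow> 'h \<Rightarrow> 'h"
  assumes H: "chilbert UNIV smul ip"
    and d: "d \<ge> 1"
    and A: "commuting_contractions UNIV smul ip d A"
  shows "von_neumann_ineq (l2_space ip d) (l2_smul smul) (l2_ip ip d) d
            (multishift d (\<lambda>j \<alpha>. A j))
         \<longleftrightarrow> von_neumann_ineq UNIV smul ip d A"
proof -
  interpret complex_inner_space smul ip
    using H by (rule chilbert_imp_complex_inner_space)
  have "lin_contraction (A j)" if "j < d" for j
    using A that unfolding commuting_contractions_def by (auto intro: lin_contraction_if_opnorm_le_1)
  then interpret contraction_tuple smul ip d A
    by unfold_locales
  show ?thesis
    using von_neumann_ineq_multishift_if_tuple von_neumann_ineq_tuple_if_multishift by blast
qed

end
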